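(* Let $\tilde{\mathcal{X}}=\mathcal{Y}=\mathcal{Z}=\{0,1\}$ and $\mathcal{X}=\tilde{\mathcal{X}}\times\mathcal{Z}$. The channel input is $X=(\tilde X,\tilde Z)$; let $N\sim\mathsf{Ber}(0.5)$ be independent of $X$, set $Y=\tilde X\tilde Z+N(1-\tilde Z)$ with induced kernel $P_{Y|\tilde X,\tilde Z}$, and define the wiretap channel $P_{Y,Z|\tilde X,\tilde Z}=P_{Y|\tilde X,\tilde Z}\mathbb{1}\{Z=\tilde Z\}$. Let the cost function be $\mathsf{C}(\tilde x,\tilde z)=\tilde z$ and the cost constraint $b=0.5$. Then $$\max_{P_{U,V,X}} \big(I_P(V;Y|U)-I_P(V;Z|U)\big)\ \ge\ 0.5\ >\ \max_{P_{V,X}:\ \mathbb{E}_P[\mathsf{C}(X)]\le 0.5}\big(I_P(V;Y)-I_P(V;Z)\big),$$ where the first maximum is over finite sets $\mathcal{U},\mathcal{V}$ and PMFs $P_{U,V,X}$ with $P_{U,V,X}=P_{U,V}P_{X|V}$ and $\mathbb{E}_P[\mathsf{C}(X)]\le 0.5$, computed under $P_{U,V,X}P_{Y,Z|X}$, and the second maximum is over finite sets $\mathcal{V}$ and PMFs $P_{V,X}$, computed under $P_{V,X}P_{Y,Z|X}$.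
   Context: The left-hand maximum is the quantity $\bar C(0.5)$, which (by the paper's main theorem) equals the secrecy-capacity of this cost-constrained wiretap channel; the right-hand side is the single-auxiliary analogue of the unconstrained wiretap secrecy-capacity formula restricted to cost-feasible input distributions. *)

theory Defs
  imports "HOL-Probability.Probability"
begin

definition cond_mutual_info :: "('a \<times> 'b \<times> 'c) pmf \<Rightarrow> real" where
  "cond_mutual_info J =
     (\<Sum>(a,b,c)\<in>set_pmf J.
        pmf J (a,b,c) *
        log 2 (pmf J (a,b,c) * pmf (map_pmf fst J) a /
               (pmf (map_pmf (\<lambda>(a,b,c). (a,b)) J) (a,b) *
                pmf (map_pmf (\<lambda>(a,b,c). (a,c)) J) (a,c))))"

definition mutual_info :: "('b \<times> 'c) pmf \<Rightarrow> real" where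
  "mutual_info J = cond_mutual_info (map_pmf (\<lambda>(b,c). ((),b,c)) J)"

definition input_alph :: "(nat \<times> nat) set" where
  "input_alph = {0,1} \<times> {0,1}"

definition cost :: "nat \<times> nat \<Rightarrow> real" where
  "cost x = real (snd x)"

definition wiretap :: "nat \<times> nat \<Rightarrow> (nat \<times> nat) pmf" where
  "wiretap x = map_pmf (\<lambda>n. (fst x * snd x + (if n then 1 else 0) * (1 - snd x), snd x))
                       (bernoulli_pmf (1/2))"

definition markov_joint :: "('u \<times> 'v) pmf \<Rightarrow> ('v \<Rightarrow> (nat \<times> nat) pmf) \<Rightarrow> ('u \<times> 'v \<times> (nat \<times> nat)) pmf" where
  "markov_joint PUV K = bind_pmf PUV (\<lambda>(u,v). map_pmf (\<lambda>x. (u,v,x)) (K v))"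

definition out_joint3 :: "('u \<times> 'v \<times> (nat \<times> nat)) pmf \<Rightarrow> ('u \<times> 'v \<times> nat \<times> nat) pmf" where
  "out_joint3 P = bind_pmf P (\<lambda>(u,v,x). map_pmf (\<lambda>(y,z). (u,v,y,z)) (wiretap x))"

definition out_joint2 :: "('v \<times> (nat \<times> nat)) pmf \<Rightarrow> ('v \<times> nat \<times> nat) pmf" where
  "out_joint2 P = bind_pmf P (\<lambda>(v,x). map_pmf (\<lambda>(y,z). (v,y,z)) (wiretap x))"

definition obj3 :: "('u \<times> 'v \<times> (nat \<times> nat)) pmf \<Rightarrow> real" where
  "obj3 P = cond_mutual_info (map_pmf (\<lambda>(u,v,y,z). (u,v,y)) (out_joint3 P))
          - cond_mutual_info (map_pmf (\<lambda>(u,v,y,z). (u,v,z)) (out_joint3 P))"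

definition obj2 :: "('v \<times> (nat \<times> nat)) pmf \<Rightarrow> real" where
  "obj2 P = mutual_info (map_pmf (\<lambda>(v,y,z). (v,y)) (out_joint2 P))
          - mutual_info (map_pmf (\<lambda>(v,y,z). (v,z)) (out_joint2 P))"

end

theory Submission
  imports Defs
begin

(* Achievability: let U choose, with probability 1/2 each, between idling (zt = 0, cost 0) and
   sending a uniform bit V cleanly (zt = 1, so Y = xt).  Since Z = zt does not depend on the bit,
   this gives I(V;Y|U) - I(V;Z|U) = 1/2 at average cost 1/2.

   Converse without U: for each v let a v, b v be the masses of the clean inputs (0,1), (1,1),
   c v the mass of the inputs with zt = 0 (whose output Y is pure noise), pi v = a v + b v + c v,
   and m = sum (a + b) = E[cost] <= 1/2.  In nats, comparing P(Y|v) with the uniform distribution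
   gives I(V;Y) <= sum (a v - b v)^2 / pi v, while the triangular-discrimination lower bound on
   divergence gives I(V;Z) >= sum (a v + b v - pi v m)^2 / pi v.  As (a - b)^2 <= (a + b)^2,
   the difference is at most m^2 <= 1/4 nats = 1/(4 ln 2) < 1/2 bits. *)

lemma mult_ln_div_ge_triangular:
  fixes K R :: real
  assumes "0 \<le> K" "0 \<le> R" "R = 0 \<Longrightarrow> K = 0"
  shows "K - R + (K - R)\<^sup>2 / (2 * (K + R)) \<le> K * ln (K / R)"
proof (cases "K = 0")
  case True
  then show ?thesis using assms by (simp add: power2_eq_square)
next
  case False
  then have K: "K > 0" and R: "R > 0" using assms by (auto simp: less_le)
  have "ln (R / K) = 2 * ln (sqrt (R / K))" using K R by (simp add: ln_sqrt)
  also have "\<dots> \<le> 2 * (sqrt (R / K) - 1)" using K R ln_le_minus_one[of "sqrt (R / K)"] by simp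
  finally have "K * ln (R / K) \<le> K * (2 * (sqrt (R / K) - 1))" using K by simp
  also have "\<dots> = 2 * sqrt K * sqrt R - 2 * K"
    using K R by (simp add: real_sqrt_divide field_simps)
  finally have hellinger: "K - R + (sqrt K - sqrt R)\<^sup>2 \<le> K * ln (K / R)"
    using K R by (simp add: ln_div power2_eq_square algebra_simps)
  have sq: "(sqrt K)\<^sup>2 = K" "(sqrt R)\<^sup>2 = R" using K R by auto
  have "(sqrt K + sqrt R)\<^sup>2 \<le> 2 * (K + R)"
    using sq zero_le_power2[of "sqrt K - sqrt R"] by (simp add: power2_eq_square algebra_simps)
  then have "(sqrt K - sqrt R)\<^sup>2 * (sqrt K + sqrt R)\<^sup>2 \<le> (sqrt K - sqrt R)\<^sup>2 * (2 * (K + R))"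
    by (rule mult_left_mono) simp
  moreover have "(K - R)\<^sup>2 = (sqrt K - sqrt R)\<^sup>2 * (sqrt K + sqrt R)\<^sup>2"
    using sq by (simp add: power2_eq_square algebra_simps)
  ultimately have "(K - R)\<^sup>2 \<le> (sqrt K - sqrt R)\<^sup>2 * (2 * (K + R))" by simp
  then have "(K - R)\<^sup>2 / (2 * (K + R)) \<le> (sqrt K - sqrt R)\<^sup>2"
    using K R by (simp add: divide_le_eq)
  with hellinger show ?thesis by linarith
qed

lemma square_div_harmonic_le:
  fixes x y d :: real
  assumes "x > 0" "y > 0"
  shows "2 * d\<^sup>2 / (x + y) \<le> d\<^sup>2 / (2 * x) + d\<^sup>2 / (2 * y)"
proof -
  have "4 * x * y \<le> (x + y)\<^sup>2" using zero_le_power2[of "x - y"] by (simp add: power2_eq_square algebra_simps)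
  then have "2 / (x + y) \<le> 1 / (2 * x) + 1 / (2 * y)"
    using assms by (simp add: field_simps power2_eq_square)
  from mult_left_mono[OF this, of "d\<^sup>2"] show ?thesis by (simp add: algebra_simps)
qed

lemma binary_chi_square_uniform:
  fixes u w :: real
  assumes "0 \<le> u" "0 \<le> w"
  shows "u * (u / ((u + w) * (1/2)) - 1) + w * (w / ((u + w) * (1/2)) - 1) = (u - w)\<^sup>2 / (u + w)"
proof (cases "u + w = 0")
  case False
  then show ?thesis by (simp add: divide_simps power2_eq_square) (simp add: algebra_simps)
qed (use assms in simp)

lemma binary_triangular_ge:
  fixes s t m :: real
  assumes "0 \<le> s" "0 \<le> t" "0 \<le> m" "m \<le> 1"
  shows "(s - (s + t) * m)\<^sup>2 / (s + t) \<le>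
    (t - (s + t) * (1 - m))\<^sup>2 / (2 * (t + (s + t) * (1 - m))) + (s - (s + t) * m)\<^sup>2 / (2 * (s + (s + t) * m))"
proof -
  define d where "d = s - (s + t) * m"
  define x where "x = t + (s + t) * (1 - m)"
  define y where "y = s + (s + t) * m"
  have "(t - (s + t) * (1 - m))\<^sup>2 = d\<^sup>2" by (simp add: d_def power2_eq_square algebra_simps)
  moreover have "d\<^sup>2 / (s + t) \<le> d\<^sup>2 / (2 * x) + d\<^sup>2 / (2 * y)"
  proof (cases "x = 0 \<or> y = 0")
    case True
    with assms have "d = 0" by (auto simp: d_def x_def y_def add_nonneg_eq_0_iff)
    then show ?thesis by simp
  next
    case False
    then have "x > 0" "y > 0" using assms by (simp_all add: x_def y_def less_le)
    moreover have "2 * d\<^sup>2 / (x + y) = d\<^sup>2 / (s + t)"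
    proof -
      have "x + y = 2 * (s + t)" by (simp add: x_def y_def algebra_simps)
      then show ?thesis by (simp only: mult_divide_mult_cancel_left_if) simp
    qed
    ultimately show ?thesis using square_div_harmonic_le[of x y d] by simp
  qed
  ultimately show ?thesis unfolding d_def[symmetric] x_def[symmetric] y_def[symmetric] by simp
qed

lemma sum_square_div_gap_le:
  fixes a b c :: "'v \<Rightarrow> real"
  assumes "finite V" and nonneg: "\<And>v. 0 \<le> a v" "\<And>v. 0 \<le> b v" "\<And>v. 0 \<le> c v"
    and total: "(\<Sum>v\<in>V. a v + b v + c v) = 1"
  defines "m \<equiv> \<Sum>v\<in>V. a v + b v"
  shows "(\<Sum>v\<in>V. (a v - b v)\<^sup>2 / (a v + b v + c v))
    - (\<Sum>v\<in>V. (a v + b v - (a v + b v + c v) * m)\<^sup>2 / (a v + b v + c v)) \<le> m\<^sup>2"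
proof -
  have pointwise: "(a v - b v)\<^sup>2 / (a v + b v + c v) - (a v + b v - (a v + b v + c v) * m)\<^sup>2 / (a v + b v + c v)
      \<le> 2 * m * (a v + b v) - m\<^sup>2 * (a v + b v + c v)" for v
  proof -
    define s where "s = a v + b v"
    define \<pi> where "\<pi> = a v + b v + c v"
    have "\<pi> \<ge> 0" "(a v - b v)\<^sup>2 \<le> s\<^sup>2"
      using nonneg[of v] by (simp_all add: \<pi>_def s_def power2_eq_square algebra_simps)
    then have "(a v - b v)\<^sup>2 / \<pi> - (s - \<pi> * m)\<^sup>2 / \<pi> \<le> s\<^sup>2 / \<pi> - (s - \<pi> * m)\<^sup>2 / \<pi>"
      by (simp add: divide_right_mono)
    also have "\<dots> = 2 * m * s - m\<^sup>2 * \<pi>"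
    proof (cases "\<pi> = 0")
      case True
      then have "s = 0" using nonneg[of v] by (simp add: \<pi>_def s_def)
      with True show ?thesis by simp
    qed (simp add: field_simps power2_eq_square)
    finally show ?thesis by (simp add: s_def \<pi>_def)
  qed
  have "(\<Sum>v\<in>V. (a v - b v)\<^sup>2 / (a v + b v + c v))
      - (\<Sum>v\<in>V. (a v + b v - (a v + b v + c v) * m)\<^sup>2 / (a v + b v + c v))
      \<le> (\<Sum>v\<in>V. 2 * m * (a v + b v) - m\<^sup>2 * (a v + b v + c v))"
    using pointwise by (simp add: sum_subtractf[symmetric] sum_mono)
  also have "\<dots> = m\<^sup>2"
    by (simp add: sum_subtractf sum_distrib_left[symmetric] total m_def[symmetric] power2_eq_square)
  finally show ?thesis .
qed

lemma pmf_map_fst_eq_sum: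
  assumes "finite Y" "set_pmf J \<subseteq> UNIV \<times> Y"
  shows "pmf (map_pmf fst J) v = (\<Sum>y\<in>Y. pmf J (v, y))"
proof -
  have "pmf (map_pmf fst J) v = measure J (fst -` {v} \<inter> set_pmf J)"
    by (simp add: pmf_map measure_Int_set_pmf)
  also have "fst -` {v} \<inter> set_pmf J = ({v} \<times> Y) \<inter> set_pmf J" using assms by auto
  also have "measure J \<dots> = (\<Sum>w\<in>{v} \<times> Y. pmf J w)"
    using assms by (simp add: measure_Int_set_pmf measure_measure_pmf_finite)
  also have "\<dots> = (\<Sum>y\<in>Y. pmf J (v, y))"
  proof -
    have "{v} \<times> Y = Pair v ` Y" by auto
    then show ?thesis by (simp add: sum.reindex inj_on_def)
  qed
  finally show ?thesis .
qed

lemma pmf_map_snd_eq_sum: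
  assumes "finite V" "set_pmf J \<subseteq> V \<times> UNIV"
  shows "pmf (map_pmf snd J) y = (\<Sum>v\<in>V. pmf J (v, y))"
proof -
  have "pmf (map_pmf snd J) y = pmf (map_pmf fst (map_pmf prod.swap J)) y"
    by (simp add: map_pmf_comp)
  also have "\<dots> = (\<Sum>v\<in>V. pmf (map_pmf prod.swap J) (y, v))"
    using assms by (intro pmf_map_fst_eq_sum) auto
  also have "\<dots> = (\<Sum>v\<in>V. pmf J (v, y))"
    using pmf_map_inj'[of prod.swap J "(v, y)" for v] by simp
  finally show ?thesis .
qed

lemma pmf_map_pos: "pmf M x > 0 \<Longrightarrow> pmf (map_pmf f M) (f x) > 0"
proof -
  assume "pmf M x > 0"
  then have "f x \<in> set_pmf (map_pmf f M)" by (simp add: set_pmf_iff)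
  then show ?thesis by (rule pmf_positive)
qed

lemma mutual_info_eq_double_sum:
  fixes J :: "('b \<times> 'c) pmf"
  assumes "finite B" "finite C" "set_pmf J \<subseteq> B \<times> C"
  shows "mutual_info J * ln 2 =
    (\<Sum>b\<in>B. \<Sum>c\<in>C. pmf J (b, c) * ln (pmf J (b, c) / (pmf (map_pmf fst J) b * pmf (map_pmf snd J) c)))"
proof -
  define g where "g = (\<lambda>(b::'b, c::'c). ((), b, c))"
  have "inj g" by (auto simp: g_def inj_def)
  have unit_marg: "pmf (map_pmf fst (map_pmf g J)) () = 1"
    by (simp add: map_pmf_comp g_def split_beta)
  have "map_pmf (\<lambda>(a, b, c). (a, b)) (map_pmf g J) = map_pmf (Pair ()) (map_pmf fst J)"
       "map_pmf (\<lambda>(a, b, c). (a, c)) (map_pmf g J) = map_pmf (Pair ()) (map_pmf snd J)"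
    by (simp_all add: map_pmf_comp g_def split_beta)
  then have pair_margs:
    "pmf (map_pmf (\<lambda>(a, b, c). (a, b)) (map_pmf g J)) ((), b) = pmf (map_pmf fst J) b"
    "pmf (map_pmf (\<lambda>(a, b, c). (a, c)) (map_pmf g J)) ((), c) = pmf (map_pmf snd J) c" for b c
    by (simp_all add: pmf_map_inj' inj_def)
  have "mutual_info J = (\<Sum>t\<in>g ` set_pmf J. (case t of (a, b, c) \<Rightarrow>
        pmf (map_pmf g J) (a, b, c) * log 2 (pmf (map_pmf g J) (a, b, c) * pmf (map_pmf fst (map_pmf g J)) a /
               (pmf (map_pmf (\<lambda>(a, b, c). (a, b)) (map_pmf g J)) (a, b) *
                pmf (map_pmf (\<lambda>(a, b, c). (a, c)) (map_pmf g J)) (a, c)))))"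
    unfolding mutual_info_def cond_mutual_info_def g_def[symmetric] by simp
  also have "\<dots> = (\<Sum>(b, c)\<in>set_pmf J.
      pmf J (b, c) * log 2 (pmf J (b, c) / (pmf (map_pmf fst J) b * pmf (map_pmf snd J) c)))"
    using \<open>inj g\<close> unit_marg pair_margs
    by (subst sum.reindex) (auto intro: inj_on_subset simp: g_def pmf_map_inj' split_beta)
  also have "\<dots> = (\<Sum>(b, c)\<in>B \<times> C.
      pmf J (b, c) * log 2 (pmf J (b, c) / (pmf (map_pmf fst J) b * pmf (map_pmf snd J) c)))"
    using assms by (intro sum.mono_neutral_left) (auto simp: set_pmf_eq)
  finally have "mutual_info J = (\<Sum>(b, c)\<in>B \<times> C.
      pmf J (b, c) * ln (pmf J (b, c) / (pmf (map_pmf fst J) b * pmf (map_pmf snd J) c))) / ln 2"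
    by (simp add: log_def sum_divide_distrib case_prod_unfold)
  then show ?thesis by (simp add: sum.cartesian_product)
qed

lemma mutual_info_le_chi_square:
  fixes J :: "('b \<times> 'c) pmf"
  assumes fin: "finite B" "finite C" and supp: "set_pmf J \<subseteq> B \<times> C"
    and q: "\<And>c. c \<in> C \<Longrightarrow> q c > 0" "(\<Sum>c\<in>C. q c) = 1"
  shows "mutual_info J * ln 2 \<le>
    (\<Sum>b\<in>B. \<Sum>c\<in>C. pmf J (b, c) * (pmf J (b, c) / (pmf (map_pmf fst J) b * q c) - 1))"
proof -
  define \<pi> where "\<pi> = pmf (map_pmf fst J)"
  define p where "p = pmf (map_pmf snd J)"
  have pointwise: "pmf J (b, c) * ln (pmf J (b, c) / (\<pi> b * p c))
      \<le> pmf J (b, c) * (pmf J (b, c) / (\<pi> b * q c) - 1) + pmf J (b, c) * (q c / p c - 1)"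
    if "c \<in> C" for b c
  proof (cases "pmf J (b, c) = 0")
    case False
    then have "pmf J (b, c) > 0" by (simp add: less_le)
    then have pos: "pmf J (b, c) > 0" "\<pi> b > 0" "p c > 0" "q c > 0"
      using pmf_map_pos[of J "(b, c)" fst] pmf_map_pos[of J "(b, c)" snd] q(1)[OF that]
      by (auto simp: \<pi>_def p_def)
    then have "ln (pmf J (b, c) / (\<pi> b * p c)) = ln (pmf J (b, c) / (\<pi> b * q c)) + ln (q c / p c)"
      by (simp add: ln_div ln_mult)
    also have "\<dots> \<le> (pmf J (b, c) / (\<pi> b * q c) - 1) + (q c / p c - 1)"
      using pos by (intro add_mono ln_le_minus_one) auto
    finally show ?thesis using pos(1) by (simp add: distrib_left[symmetric])
  qed simp
  have "p c = (\<Sum>b\<in>B. pmf J (b, c))" for c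
    unfolding p_def using supp by (intro pmf_map_snd_eq_sum[OF fin(1)]) blast
  then have "(\<Sum>b\<in>B. \<Sum>c\<in>C. pmf J (b, c) * (q c / p c - 1)) = (\<Sum>c\<in>C. p c * (q c / p c - 1))"
    by (subst sum.swap) (simp add: sum_distrib_right)
  also have "\<dots> \<le> (\<Sum>c\<in>C. q c - p c)"
    using q(1) by (intro sum_mono) (fastforce simp: field_simps less_imp_le)
  also have "\<dots> = 0"
  proof -
    have "set_pmf (map_pmf snd J) \<subseteq> C" using supp by auto
    then have "(\<Sum>c\<in>C. p c) = 1" using fin by (simp add: p_def sum_pmf_eq_1)
    then show ?thesis using q(2) by (simp add: sum_subtractf)
  qed
  finally have "(\<Sum>b\<in>B. \<Sum>c\<in>C. pmf J (b, c) * (q c / p c - 1)) \<le> 0" .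
  moreover have "mutual_info J * ln 2 \<le> (\<Sum>b\<in>B. \<Sum>c\<in>C.
      pmf J (b, c) * (pmf J (b, c) / (\<pi> b * q c) - 1) + pmf J (b, c) * (q c / p c - 1))"
    unfolding mutual_info_eq_double_sum[OF fin supp] \<pi>_def[symmetric] p_def[symmetric]
    using pointwise by (intro sum_mono) auto
  ultimately show ?thesis by (simp add: sum.distrib \<pi>_def)
qed

lemma mutual_info_ge_triangular:
  fixes J :: "('b \<times> 'c) pmf"
  defines "R \<equiv> \<lambda>b c. pmf (map_pmf fst J) b * pmf (map_pmf snd J) c"
  assumes fin: "finite B" "finite C" and supp: "set_pmf J \<subseteq> B \<times> C"
  shows "(\<Sum>b\<in>B. \<Sum>c\<in>C. (pmf J (b, c) - R b c)\<^sup>2 / (2 * (pmf J (b, c) + R b c)))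
    \<le> mutual_info J * ln 2"
proof -
  have pointwise: "pmf J (b, c) - R b c + (pmf J (b, c) - R b c)\<^sup>2 / (2 * (pmf J (b, c) + R b c))
      \<le> pmf J (b, c) * ln (pmf J (b, c) / R b c)" for b c
  proof (rule mult_ln_div_ge_triangular)
    show "R b c = 0 \<Longrightarrow> pmf J (b, c) = 0"
      using pmf_map_pos[of J "(b, c)" fst] pmf_map_pos[of J "(b, c)" snd]
      by (fastforce simp: R_def less_le)
  qed (simp_all add: R_def)
  have total: "(\<Sum>b\<in>B. \<Sum>c\<in>C. pmf J (b, c)) = 1"
    using fin supp by (simp add: sum.cartesian_product sum_pmf_eq_1)
  have "(\<Sum>b\<in>B. pmf (map_pmf fst J) b) = 1" "(\<Sum>c\<in>C. pmf (map_pmf snd J) c) = 1"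
    using fin supp by (intro sum_pmf_eq_1; force)+
  then have "(\<Sum>b\<in>B. \<Sum>c\<in>C. R b c) = 1"
    by (simp add: R_def sum_product[symmetric])
  with total have "(\<Sum>b\<in>B. \<Sum>c\<in>C. pmf J (b, c) - R b c) = 0"
    by (simp add: sum_subtractf)
  then have "(\<Sum>b\<in>B. \<Sum>c\<in>C. (pmf J (b, c) - R b c)\<^sup>2 / (2 * (pmf J (b, c) + R b c)))
      = (\<Sum>b\<in>B. \<Sum>c\<in>C. pmf J (b, c) - R b c + (pmf J (b, c) - R b c)\<^sup>2 / (2 * (pmf J (b, c) + R b c)))"
    by (simp add: sum.distrib)
  also have "\<dots> \<le> (\<Sum>b\<in>B. \<Sum>c\<in>C. pmf J (b, c) * ln (pmf J (b, c) / R b c))"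
    using pointwise by (intro sum_mono) auto
  also have "\<dots> = mutual_info J * ln 2"
    unfolding mutual_info_eq_double_sum[OF fin supp] R_def ..
  finally show ?thesis .
qed

lemma pmf_map_bernoulli_half:
  "pmf (map_pmf f (bernoulli_pmf (1/2))) x = ((if f True = x then 1 else 0) + (if f False = x then 1 else 0)) / 2"
proof -
  have "pmf (map_pmf f (bernoulli_pmf (1/2))) x = sum (pmf (bernoulli_pmf (1/2))) (f -` {x})"
    by (simp add: pmf_map measure_measure_pmf_finite)
  also have "\<dots> = (\<Sum>b\<in>UNIV. if f b = x then pmf (bernoulli_pmf (1/2)) b else 0)"
    using sum.inter_filter[of "UNIV :: bool set" "pmf (bernoulli_pmf (1/2))" "\<lambda>b. f b = x"]
    by (simp add: vimage_def)
  also have "\<dots> = ((if f True = x then 1 else 0) + (if f False = x then 1 else 0)) / 2"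
    by (simp add: UNIV_bool add_divide_distrib)
  finally show ?thesis .
qed

lemma pmf_map_wiretap:
  "pmf (map_pmf h (wiretap x)) t = ((if h (fst x * snd x + (1 - snd x), snd x) = t then 1 else 0)
      + (if h (fst x * snd x, snd x) = t then 1 else 0)) / 2"
  unfolding wiretap_def by (simp add: map_pmf_comp pmf_map_bernoulli_half)

lemma input_alph_eq: "input_alph = {(0, 0), (0, 1), (1, 0), (1, 1)}"
  by (auto simp: input_alph_def)

definition clean_mass :: "('v \<times> nat \<times> nat) pmf \<Rightarrow> nat \<Rightarrow> 'v \<Rightarrow> real" where
  "clean_mass P y v = pmf P (v, (y, 1))"

definition noisy_mass :: "('v \<times> nat \<times> nat) pmf \<Rightarrow> 'v \<Rightarrow> real" where
  "noisy_mass P v = pmf P (v, (0, 0)) + pmf P (v, (1, 0))"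

lemma clean_mass_nonneg [simp]: "0 \<le> clean_mass P y v"
  by (simp add: clean_mass_def)

lemma noisy_mass_nonneg [simp]: "0 \<le> noisy_mass P v"
  by (simp add: noisy_mass_def)

context
  fixes P :: "('v \<times> nat \<times> nat) pmf" and V :: "'v set"
  assumes finite_V: "finite V" and set_pmf_P: "set_pmf P \<subseteq> V \<times> input_alph"
begin

lemma pmf_out_joint2_map:
  "pmf (map_pmf (\<lambda>(v, y, z). (v, h y z)) (out_joint2 P)) (v, t) =
     (\<Sum>x\<in>input_alph. pmf P (v, x) * pmf (map_pmf (\<lambda>(y, z). h y z) (wiretap x)) t)"
proof -
  define f where "f w = pmf (map_pmf (\<lambda>(y, z). h y z) (wiretap (snd w))) t" for w :: "'v \<times> nat \<times> nat"
  have "map_pmf (\<lambda>(v, y, z). (v, h y z)) (out_joint2 P) =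
      bind_pmf P (\<lambda>w. pair_pmf (return_pmf (fst w)) (map_pmf (\<lambda>(y, z). h y z) (wiretap (snd w))))"
    unfolding out_joint2_def
    by (simp add: map_bind_pmf map_pmf_comp case_prod_unfold pair_return_pmf1)
  then have "pmf (map_pmf (\<lambda>(v, y, z). (v, h y z)) (out_joint2 P)) (v, t)
      = (\<integral>w. indicator {v} (fst w) * f w \<partial>P)"
    by (simp add: pmf_bind pmf_pair f_def)
  also have "\<dots> = (\<Sum>w\<in>{v} \<times> input_alph. indicator {v} (fst w) * f w * pmf P w)"
  proof (rule integral_measure_pmf_real)
    show "finite ({v} \<times> input_alph)" by (simp add: input_alph_def)
    show "w \<in> {v} \<times> input_alph" if "w \<in> set_pmf P" "indicator {v} (fst w) * f w \<noteq> 0" for w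
      using that set_pmf_P by (auto simp: indicator_def split: if_splits)
  qed
  also have "\<dots> = (\<Sum>x\<in>input_alph. pmf P (v, x) * f (v, x))"
  proof -
    have "{v} \<times> input_alph = Pair v ` input_alph" by auto
    then show ?thesis by (simp add: sum.reindex inj_on_def mult.commute)
  qed
  finally show ?thesis by (simp add: f_def)
qed

lemma set_pmf_out_joint2_subset: "set_pmf (out_joint2 P) \<subseteq> V \<times> {0, 1} \<times> {0, 1}"
  using set_pmf_P
  by (fastforce simp: out_joint2_def wiretap_def input_alph_eq split: if_splits)

lemma pmf_out_joint2_VY:
  "y \<in> {0, 1} \<Longrightarrow>
    pmf (map_pmf (\<lambda>(v, y, z). (v, y)) (out_joint2 P)) (v, y) = clean_mass P y v + noisy_mass P v / 2"
  using pmf_out_joint2_map[of "\<lambda>y z. y"]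
  by (auto simp: input_alph_eq pmf_map_wiretap clean_mass_def noisy_mass_def)

lemma pmf_out_joint2_VZ:
  "pmf (map_pmf (\<lambda>(v, y, z). (v, z)) (out_joint2 P)) (v, 0) = noisy_mass P v"
  "pmf (map_pmf (\<lambda>(v, y, z). (v, z)) (out_joint2 P)) (v, 1) = clean_mass P 0 v + clean_mass P 1 v"
  using pmf_out_joint2_map[of "\<lambda>y z. z"]
  by (auto simp: input_alph_eq pmf_map_wiretap clean_mass_def noisy_mass_def)

lemma map_fst_out_joint2: "map_pmf fst (map_pmf (\<lambda>(v, y, z). (v, h y z)) (out_joint2 P)) = map_pmf fst P"
  unfolding out_joint2_def by (simp add: map_bind_pmf map_pmf_comp split_beta map_pmf_def[of fst P])

lemma pmf_map_fst_eq_masses: "pmf (map_pmf fst P) v = clean_mass P 0 v + clean_mass P 1 v + noisy_mass P v"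
  using set_pmf_P
  by (subst pmf_map_fst_eq_sum[where Y = input_alph])
     (auto simp: input_alph_eq clean_mass_def noisy_mass_def)

lemma sum_masses_eq_1: "(\<Sum>v\<in>V. clean_mass P 0 v + clean_mass P 1 v + noisy_mass P v) = 1"
proof -
  have "set_pmf (map_pmf fst P) \<subseteq> V" using set_pmf_P by auto
  with finite_V have "(\<Sum>v\<in>V. pmf (map_pmf fst P) v) = 1" by (rule sum_pmf_eq_1)
  then show ?thesis by (simp add: pmf_map_fst_eq_masses)
qed

lemma expectation_cost_eq_clean_mass:
  "measure_pmf.expectation P (\<lambda>(v, x). cost x) = (\<Sum>v\<in>V. clean_mass P 0 v + clean_mass P 1 v)"
proof -
  have "measure_pmf.expectation P (\<lambda>(v, x). cost x)
      = (\<Sum>w\<in>V \<times> input_alph. (case w of (v, x) \<Rightarrow> cost x) * pmf P w)"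
    using finite_V set_pmf_P by (intro integral_measure_pmf_real) (auto simp: input_alph_eq)
  also have "\<dots> = (\<Sum>v\<in>V. \<Sum>x\<in>input_alph. cost x * pmf P (v, x))"
    by (simp add: sum.cartesian_product split_beta)
  also have "\<dots> = (\<Sum>v\<in>V. clean_mass P 0 v + clean_mass P 1 v)"
    by (simp add: input_alph_eq cost_def clean_mass_def)
  finally show ?thesis .
qed

lemma sum_clean_mass_bounds:
  "0 \<le> (\<Sum>v\<in>V. clean_mass P 0 v + clean_mass P 1 v)" "(\<Sum>v\<in>V. clean_mass P 0 v + clean_mass P 1 v) \<le> 1"
proof -
  have "0 \<le> (\<Sum>v\<in>V. noisy_mass P v)" by (simp add: sum_nonneg)
  with sum_masses_eq_1 show "(\<Sum>v\<in>V. clean_mass P 0 v + clean_mass P 1 v) \<le> 1"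
    by (simp add: sum.distrib)
qed (simp add: sum_nonneg)

lemma mutual_info_VY_le:
  "mutual_info (map_pmf (\<lambda>(v, y, z). (v, y)) (out_joint2 P)) * ln 2 \<le>
    (\<Sum>v\<in>V. (clean_mass P 0 v - clean_mass P 1 v)\<^sup>2 / pmf (map_pmf fst P) v)"
proof -
  let ?J = "map_pmf (\<lambda>(v, y, z). (v, y)) (out_joint2 P)"
  have "set_pmf ?J \<subseteq> V \<times> {0, 1}" using set_pmf_out_joint2_subset by auto
  then have "mutual_info ?J * ln 2 \<le>
      (\<Sum>v\<in>V. \<Sum>y\<in>{0, 1}. pmf ?J (v, y) * (pmf ?J (v, y) / (pmf (map_pmf fst ?J) v * (1/2)) - 1))"
    using finite_V by (intro mutual_info_le_chi_square) auto
  also have "\<dots> = (\<Sum>v\<in>V. (clean_mass P 0 v - clean_mass P 1 v)\<^sup>2 / pmf (map_pmf fst P) v)"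
  proof (rule sum.cong)
    fix v
    have "pmf (map_pmf fst ?J) v = (clean_mass P 0 v + noisy_mass P v / 2) + (clean_mass P 1 v + noisy_mass P v / 2)"
      using map_fst_out_joint2[of "\<lambda>y z. y"] by (simp add: pmf_map_fst_eq_masses)
    then show "(\<Sum>y\<in>{0, 1}. pmf ?J (v, y) * (pmf ?J (v, y) / (pmf (map_pmf fst ?J) v * (1/2)) - 1)) =
        (clean_mass P 0 v - clean_mass P 1 v)\<^sup>2 / pmf (map_pmf fst P) v"
      using binary_chi_square_uniform[of "clean_mass P 0 v + noisy_mass P v / 2" "clean_mass P 1 v + noisy_mass P v / 2"]
      by (simp add: pmf_out_joint2_VY pmf_map_fst_eq_masses clean_mass_def noisy_mass_def)
  qed simp
  finally show ?thesis .
qed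

lemma mutual_info_VZ_ge:
  defines "m \<equiv> \<Sum>v\<in>V. clean_mass P 0 v + clean_mass P 1 v"
  shows "(\<Sum>v\<in>V. (clean_mass P 0 v + clean_mass P 1 v - pmf (map_pmf fst P) v * m)\<^sup>2 / pmf (map_pmf fst P) v)
    \<le> mutual_info (map_pmf (\<lambda>(v, y, z). (v, z)) (out_joint2 P)) * ln 2"
proof -
  let ?J = "map_pmf (\<lambda>(v, y, z). (v, z)) (out_joint2 P)"
  have supp: "set_pmf ?J \<subseteq> V \<times> {0, 1}" using set_pmf_out_joint2_subset by auto
  have fst_J: "pmf (map_pmf fst ?J) v = pmf (map_pmf fst P) v" for v
    using map_fst_out_joint2[of "\<lambda>y z. z"] by simp
  have "pmf (map_pmf snd ?J) z = (\<Sum>v\<in>V. pmf ?J (v, z))" for z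
    using supp by (intro pmf_map_snd_eq_sum[OF finite_V]) auto
  then have snd_J: "pmf (map_pmf snd ?J) 1 = m" "pmf (map_pmf snd ?J) 0 = 1 - m"
    using sum_masses_eq_1 pmf_out_joint2_VZ(2)[unfolded One_nat_def]
    by (simp_all add: pmf_out_joint2_VZ m_def sum.distrib)
  have "(\<Sum>v\<in>V. (clean_mass P 0 v + clean_mass P 1 v - pmf (map_pmf fst P) v * m)\<^sup>2 / pmf (map_pmf fst P) v)
      \<le> (\<Sum>v\<in>V. \<Sum>z\<in>{0, 1}. (pmf ?J (v, z) - pmf (map_pmf fst ?J) v * pmf (map_pmf snd ?J) z)\<^sup>2
            / (2 * (pmf ?J (v, z) + pmf (map_pmf fst ?J) v * pmf (map_pmf snd ?J) z)))"
  proof (rule sum_mono)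
    fix v
    define s t where "s = clean_mass P 0 v + clean_mass P 1 v" and "t = noisy_mass P v"
    have "0 \<le> s" "0 \<le> t" by (simp_all add: s_def t_def)
    moreover have "pmf (map_pmf fst P) v = s + t" by (simp add: pmf_map_fst_eq_masses s_def t_def)
    moreover have sum_01: "(\<Sum>z\<in>{0, 1}. g z) = g 0 + g (1 :: nat)" for g :: "nat \<Rightarrow> real" by simp
    ultimately show "(clean_mass P 0 v + clean_mass P 1 v - pmf (map_pmf fst P) v * m)\<^sup>2 / pmf (map_pmf fst P) v
      \<le> (\<Sum>z\<in>{0, 1}. (pmf ?J (v, z) - pmf (map_pmf fst ?J) v * pmf (map_pmf snd ?J) z)\<^sup>2
            / (2 * (pmf ?J (v, z) + pmf (map_pmf fst ?J) v * pmf (map_pmf snd ?J) z)))"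
      using binary_triangular_ge[of s t m] sum_clean_mass_bounds
      unfolding sum_01 fst_J snd_J pmf_out_joint2_VZ s_def[symmetric] t_def[symmetric] m_def[symmetric]
      by simp
  qed
  also have "\<dots> \<le> mutual_info ?J * ln 2"
    using finite_V supp by (intro mutual_info_ge_triangular) auto
  finally show ?thesis .
qed

end

lemma obj2_le_quarter_div_ln2:
  fixes P :: "('v \<times> nat \<times> nat) pmf"
  assumes "finite (set_pmf P)" and "\<forall>w\<in>set_pmf P. snd w \<in> input_alph"
    and cost_le: "measure_pmf.expectation P (\<lambda>(v, x). cost x) \<le> 1/2"
  shows "obj2 P \<le> 1 / (4 * ln 2)"
proof -
  define V where "V = fst ` set_pmf P"
  have V: "finite V" "set_pmf P \<subseteq> V \<times> input_alph" using assms(1,2) by (force simp: V_def)+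
  define m where "m = (\<Sum>v\<in>V. clean_mass P 0 v + clean_mass P 1 v)"
  have "obj2 P * ln 2 \<le> (\<Sum>v\<in>V. (clean_mass P 0 v - clean_mass P 1 v)\<^sup>2 / pmf (map_pmf fst P) v)
      - (\<Sum>v\<in>V. (clean_mass P 0 v + clean_mass P 1 v - pmf (map_pmf fst P) v * m)\<^sup>2 / pmf (map_pmf fst P) v)"
    using mutual_info_VY_le[OF V] mutual_info_VZ_ge[OF V]
    by (simp add: obj2_def m_def left_diff_distrib)
  also have "\<dots> \<le> m\<^sup>2"
    using sum_square_div_gap_le[OF V(1), of "clean_mass P 0" "clean_mass P 1" "noisy_mass P"] sum_masses_eq_1[OF V]
    by (simp add: pmf_map_fst_eq_masses[OF V] m_def)
  also have "\<dots> \<le> (1/2)\<^sup>2"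
  proof -
    have "m = measure_pmf.expectation P (\<lambda>(v, x). cost x)" by (simp add: expectation_cost_eq_clean_mass[OF V] m_def)
    moreover have "0 \<le> m" using sum_clean_mass_bounds[OF V] by (simp add: m_def)
    ultimately show ?thesis using cost_le by (simp add: power_mono)
  qed
  finally show ?thesis by (simp add: field_simps)
qed

definition uv_example :: "(nat \<times> nat) pmf" where
  "uv_example = pmf_of_set {(0, 0), (0, 1), (1, 2), (1, 3)}"

definition input_example :: "nat \<Rightarrow> (nat \<times> nat) pmf" where
  "input_example v = return_pmf (if v \<le> 1 then (0, 0) else if v = 2 then (0, 1) else (1, 1))"

lemma out_joint3_example:
  "out_joint3 (markov_joint uv_example input_example) = bind_pmf uv_example (\<lambda>a. map_pmf (\<lambda>n.
     (let x = (if snd a \<le> 1 then (0::nat, 0::nat) else if snd a = 2 then (0, 1) else (1, 1)) in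
      (fst a, snd a, fst x * snd x + (if n then 1 else 0) * (1 - snd x), snd x))) (bernoulli_pmf (1/2)))"
  unfolding out_joint3_def markov_joint_def input_example_def wiretap_def
  by (simp add: bind_assoc_pmf bind_return_pmf map_pmf_comp case_prod_beta Let_def split_beta bind_map_pmf)

lemma set_pmf_example_VY:
  "set_pmf (map_pmf (\<lambda>(u, v, y, z). (u, v, y)) (out_joint3 (markov_joint uv_example input_example))) =
    {(0, 0, 0), (0, 0, 1), (0, 1, 0), (0, 1, 1), (1, 2, 0), (1, 3, 1)}"
  unfolding out_joint3_example unfolding uv_example_def by (auto simp: map_bind_pmf map_pmf_comp UNIV_bool)

lemma set_pmf_example_VZ:
  "set_pmf (map_pmf (\<lambda>(u, v, y, z). (u, v, z)) (out_joint3 (markov_joint uv_example input_example))) =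
    {(0, 0, 0), (0, 1, 0), (1, 2, 1), (1, 3, 1)}"
  unfolding out_joint3_example unfolding uv_example_def by (auto simp: map_bind_pmf map_pmf_comp UNIV_bool)

lemma obj3_example: "obj3 (markov_joint uv_example input_example) = 1/2"
  unfolding obj3_def cond_mutual_info_def set_pmf_example_VY set_pmf_example_VZ
  unfolding out_joint3_example unfolding uv_example_def
  by (simp add: map_bind_pmf map_pmf_comp pmf_bind_pmf_of_set pmf_map_bernoulli_half)

lemma expectation_cost_example:
  "measure_pmf.expectation (markov_joint uv_example input_example) (\<lambda>(u, v, x). cost x) = 1/2"
proof -
  have "markov_joint uv_example input_example =
      map_pmf (\<lambda>(u, v). (u, v, if v \<le> 1 then (0::nat, 0::nat) else if v = 2 then (0, 1) else (1, 1))) uv_example"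
    unfolding markov_joint_def input_example_def map_pmf_def by (simp add: case_prod_unfold bind_return_pmf)
  then show ?thesis unfolding uv_example_def by (simp add: integral_pmf_of_set cost_def)
qed

theorem proposition1:
  shows "(\<exists>(PUV :: (nat \<times> nat) pmf) (K :: nat \<Rightarrow> (nat \<times> nat) pmf).
            finite (set_pmf PUV) \<and>
            (\<forall>v. set_pmf (K v) \<subseteq> input_alph) \<and>
            measure_pmf.expectation (markov_joint PUV K) (\<lambda>(u,v,x). cost x) \<le> 1/2 \<and>
            obj3 (markov_joint PUV K) \<ge> 1/2)
       \<and> (\<exists>c < 1/2. \<forall>(P :: (nat \<times> (nat \<times> nat)) pmf).
            finite (set_pmf P) \<and>
            (\<forall>w\<in>set_pmf P. snd w \<in> input_alph) \<and>
            measure_pmf.expectation P (\<lambda>(v,x). cost x) \<le> 1/2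
            \<longrightarrow> obj2 P \<le> c)"
proof (intro conjI)
  show "\<exists>(PUV :: (nat \<times> nat) pmf) (K :: nat \<Rightarrow> (nat \<times> nat) pmf).
      finite (set_pmf PUV) \<and> (\<forall>v. set_pmf (K v) \<subseteq> input_alph) \<and>
      measure_pmf.expectation (markov_joint PUV K) (\<lambda>(u,v,x). cost x) \<le> 1/2 \<and>
      obj3 (markov_joint PUV K) \<ge> 1/2"
    using expectation_cost_example obj3_example
    by (intro exI[of _ uv_example] exI[of _ input_example])
       (auto simp: uv_example_def input_example_def input_alph_def)
  have "1 / (4 * ln 2) < (1/2 :: real)"
    using ln2_ge_two_thirds by (simp add: field_simps)
  then show "\<exists>c < 1/2. \<forall>(P :: (nat \<times> (nat \<times> nat)) pmf).
      finite (set_pmf P) \<and> (\<forall>w\<in>set_pmf P. snd w \<in> input_alph) \<and>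
      measure_pmf.expectation P (\<lambda>(v,x). cost x) \<le> 1/2 \<longrightarrow> obj2 P \<le> c"
    using obj2_le_quarter_div_ln2 by blast
qed

end
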